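(* Let $A\in\mathbb{R}^{m\times n}$, $\sigma>0$, and consider $y=Ax+\epsilon$ with $\epsilon\sim\mathcal{N}(0,\sigma^2I_m)$ independent of $x$, where $x$ has prior $$\pi(x)=\sum_{j=1}^M w_j\,\varphi(x;\mu_j,\tau_j^2I_n),\qquad \mu_j\in\mathbb{R}^n,\ \tau_j>0,\ w_j\ge0,\ \sum_{j=1}^Mw_j=1.$$ Fix $y^\star\in\mathbb{R}^m$. Let $\Sigma_j:=\sigma^2I_m+\tau_j^2AA^\top$, $s_j(y^\star):=\frac12\|\Sigma_j^{-1/2}(y^\star-A\mu_j)\|_2^2$, and define the selection score $\ell_j(y^\star):=s_j(y^\star)+\frac12\log\det(\Sigma_j)$. Let $\ell_{(1)}(y^\star)\le\ell_{(2)}(y^\star)$ be the smallest and second-smallest among $\{\ell_j(y^\star)\}_{j=1}^M$, and $\delta_\ell(y^\star):=\frac1m(\ell_{(2)}(y^\star)-\ell_{(1)}(y^\star))$. Assume: (1) there is $C>1$ with $1/C\le w_i/w_j\le C$ for all $i,j$; (2) there is a unique minimizer $j^\star=\arg\min_j\ell_j(y^\star)$ and $\delta_\ell(y^\star)\ge\delta_0$ for some constant $\delta_0>0$. Let $J$ be a random index with $$\Pr(J=j)=\tilde w_j(y^\star):=\frac{w_j\,\varphi(y^\star;A\mu_j,\Sigma_j)}{\sum_{i=1}^Mw_i\,\varphi(y^\star;A\mu_i,\Sigma_i)}.$$ Then (i) $\Pr(J\ne j^\star)\le CM e^{-m\delta_0}$; and (ii) the posterior $\pi(\cdot\mid y^\star)$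 of $x$ given $y=y^\star$ satisfies $$\big\|\pi(\cdot\mid y^\star)-\mathcal{N}(m_{j^\star}(y^\star),\Sigma_{\mathrm{post},j^\star})\big\|_{\mathsf{TV}}\le CMe^{-m\delta_0},$$ where $\Sigma_{\mathrm{post},j}=\big(\tau_j^{-2}I_n+\tfrac1{\sigma^2}A^\top A\big)^{-1}$ and $m_j(y^\star)=\Sigma_{\mathrm{post},j}\big(\tau_j^{-2}\mu_j+\tfrac1{\sigma^2}A^\top y^\star\big)$.
   Context: $\varphi(\cdot;\mu,\Sigma)$ denotes the density of $\mathcal{N}(\mu,\Sigma)$; $\|\cdot\|_{\mathsf{TV}}$ is total variation distance; $\pi(\cdot\mid y^\star)$ is the Bayesian posterior under the stated prior and likelihood $y\mid x\sim\mathcal{N}(Ax,\sigma^2I_m)$. *)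

theory Defs
  imports "HOL-Analysis.Analysis"
begin

definition gauss_pdf :: "real^'d \<Rightarrow> real^'d^'d \<Rightarrow> real^'d \<Rightarrow> real" where
  "gauss_pdf mu S x =
     exp (- (1/2) * ((x - mu) \<bullet> (matrix_inv S *v (x - mu))))
     / sqrt ((2 * pi) ^ CARD('d) * det S)"

definition normal_measure :: "real^'d \<Rightarrow> real^'d^'d \<Rightarrow> (real^'d) measure" where
  "normal_measure mu S = density lborel (\<lambda>x. ennreal (gauss_pdf mu S x))"

definition tv_dist :: "'a measure \<Rightarrow> 'a measure \<Rightarrow> real" where
  "tv_dist P Q = (SUP B \<in> sets P. \<bar>measure P B - measure Q B\<bar>)"

definition mix_prior :: "nat \<Rightarrow> (nat \<Rightarrow> real) \<Rightarrow> (nat \<Rightarrow> real^'n) \<Rightarrow> (nat \<Rightarrow> real)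
    \<Rightarrow> real^'n \<Rightarrow> real" where
  "mix_prior M w mu tau x = (\<Sum>j<M. w j * gauss_pdf (mu j) ((tau j)\<^sup>2 *\<^sub>R mat 1) x)"

definition lin_gauss_lik :: "real^'n^'m \<Rightarrow> real \<Rightarrow> real^'m \<Rightarrow> real^'n \<Rightarrow> real" where
  "lin_gauss_lik A sg y x = gauss_pdf (A *v x) (sg\<^sup>2 *\<^sub>R mat 1) y"

definition bayes_posterior :: "nat \<Rightarrow> (nat \<Rightarrow> real) \<Rightarrow> (nat \<Rightarrow> real^'n) \<Rightarrow> (nat \<Rightarrow> real)
    \<Rightarrow> real^'n^'m \<Rightarrow> real \<Rightarrow> real^'m \<Rightarrow> (real^'n) measure" where
  "bayes_posterior M w mu tau A sg ystar =
     density lborel (\<lambda>x. ennreal (mix_prior M w mu tau x * lin_gauss_lik A sg ystar x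
        / (\<integral>z. mix_prior M w mu tau z * lin_gauss_lik A sg ystar z \<partial>lborel)))"

definition marg_cov :: "real^'n^'m \<Rightarrow> real \<Rightarrow> real \<Rightarrow> real^'m^'m" where
  "marg_cov A sg t = sg\<^sup>2 *\<^sub>R mat 1 + t\<^sup>2 *\<^sub>R (A ** transpose A)"

text \<open>s_j(y) = (1/2) ||Sigma_j^{-1/2}(y - A mu_j)||^2, written as (1/2) r^T Sigma_j^{-1} r.\<close>
definition sel_s :: "real^'n^'m \<Rightarrow> real \<Rightarrow> real^'n \<Rightarrow> real \<Rightarrow> real^'m \<Rightarrow> real" where
  "sel_s A sg mu t y =
     (1/2) * ((y - A *v mu) \<bullet> (matrix_inv (marg_cov A sg t) *v (y - A *v mu)))"

definition sel_score :: "real^'n^'m \<Rightarrow> real \<Rightarrow> real^'n \<Rightarrow> real \<Rightarrow> real^'m \<Rightarrow> real" where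
  "sel_score A sg mu t y = sel_s A sg mu t y + (1/2) * ln (det (marg_cov A sg t))"

definition post_weight :: "nat \<Rightarrow> (nat \<Rightarrow> real) \<Rightarrow> (nat \<Rightarrow> real^'n) \<Rightarrow> (nat \<Rightarrow> real)
    \<Rightarrow> real^'n^'m \<Rightarrow> real \<Rightarrow> real^'m \<Rightarrow> nat \<Rightarrow> real" where
  "post_weight M w mu tau A sg y j =
     w j * gauss_pdf (A *v mu j) (marg_cov A sg (tau j)) y
     / (\<Sum>i<M. w i * gauss_pdf (A *v mu i) (marg_cov A sg (tau i)) y)"

definition post_cov :: "real^'n^'m \<Rightarrow> real \<Rightarrow> real \<Rightarrow> real^'n^'n" where
  "post_cov A sg t = matrix_inv ((1 / t\<^sup>2) *\<^sub>R mat 1 + (1 / sg\<^sup>2) *\<^sub>R (transpose A ** A))"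

definition post_mean :: "real^'n^'m \<Rightarrow> real \<Rightarrow> real^'n \<Rightarrow> real \<Rightarrow> real^'m \<Rightarrow> real^'n" where
  "post_mean A sg mu t y =
     post_cov A sg t *v ((1 / t\<^sup>2) *\<^sub>R mu + (1 / sg\<^sup>2) *\<^sub>R (transpose A *v y))"

end

(*
  Each mixture component is conjugate: completing the square, with Woodbury's identity for the
  inverse of Sigma_j, factors prior times likelihood as phi(y; A mu_j, Sigma_j) times the Gaussian
  density with mean m_j(y) and covariance Sigma_post_j, and no constant is lost because both
  factorisations are joint densities of (x, y). Hence the posterior is the mixture of these Gaussians
  with weights w~_j, and its total variation distance to the jstar-th component is at most the
  weight of the other components. As phi(y; A mu_j, Sigma_j) is proportional to exp (- l_j),
  each such weight is at most (w_j / w_jstar) exp (l_jstar - l_j) <= C exp (- m delta0).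

  The Gaussian integral of exp (- x^T S x / 2), and with it det S > 0 for positive definite S,
  is obtained by eliminating one coordinate at a time and integrating it out with Fubini.
*)

theory Submission
  imports Defs "HOL-Probability.Probability"
begin

section \<open>Symmetric positive definite matrices\<close>

lemma inner_matrix_vector_transpose:
  fixes A :: "real^'n^'m"
  shows "x \<bullet> (A *v y) = (transpose A *v x) \<bullet> y"
  by (simp add: inner_vec_def matrix_vector_mult_def transpose_def sum_distrib_left
      sum_distrib_right mult_ac) (rule sum.swap)

lemma symmetric_matrixI:
  fixes S :: "real^'d^'d"
  assumes "\<And>x y. x \<bullet> (S *v y) = y \<bullet> (S *v x)"
  shows "transpose S = S"
proof -
  have "x \<bullet> (transpose S *v y) = x \<bullet> (S *v y)" for x y
    using assms[of y x]
    by (simp only: inner_matrix_vector_transpose[of x "transpose S"] transpose_transpose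
        inner_commute[of "S *v x"])
  then show ?thesis by (metis matrix_eq vector_eq_ldot)
qed

lemma symmetric_inner_commute:
  fixes S :: "real^'d^'d"
  assumes "transpose S = S"
  shows "x \<bullet> (S *v y) = y \<bullet> (S *v x)"
  by (metis assms inner_commute inner_matrix_vector_transpose)

lemma quadratic_form_add:
  fixes S :: "real^'d^'d"
  assumes "transpose S = S"
  shows "(x + y) \<bullet> (S *v (x + y)) = x \<bullet> (S *v x) + 2 * (x \<bullet> (S *v y)) + y \<bullet> (S *v y)"
  using symmetric_inner_commute[OF assms, of x y]
  by (simp add: matrix_vector_right_distrib inner_add_left inner_add_right)

lemma quadratic_form_scaleR:
  fixes S :: "real^'d^'d"
  shows "(c *\<^sub>R x) \<bullet> (S *v (c *\<^sub>R x)) = c\<^sup>2 * (x \<bullet> (S *v x))"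
  by (simp add: matrix_vector_mult_scaleR power2_eq_square)

definition spd :: "real^'d^'d \<Rightarrow> bool" where
  "spd S \<longleftrightarrow> transpose S = S \<and> (\<forall>x. x \<noteq> 0 \<longrightarrow> 0 < x \<bullet> (S *v x))"

lemma spdI:
  fixes S :: "real^'d^'d"
  assumes "\<And>x y. x \<bullet> (S *v y) = y \<bullet> (S *v x)" and "\<And>x. x \<noteq> 0 \<Longrightarrow> 0 < x \<bullet> (S *v x)"
  shows "spd S"
  using assms symmetric_matrixI unfolding spd_def by blast

lemma spd_scaleR_mat_1: "c > 0 \<Longrightarrow> spd (c *\<^sub>R mat 1 :: real^'d^'d)"
  by (rule spdI) (auto simp: scaleR_matrix_vector_assoc[symmetric] inner_commute)

lemma matrix_inv_right:
  fixes A :: "real^'n^'n"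
  assumes "invertible A"
  shows "A ** matrix_inv A = mat 1"
  using someI_ex[OF assms[unfolded invertible_def]] unfolding matrix_inv_def by blast

lemma matrix_inv_left:
  fixes A :: "real^'n^'n"
  assumes "invertible A"
  shows "matrix_inv A ** A = mat 1"
  using someI_ex[OF assms[unfolded invertible_def]] unfolding matrix_inv_def by blast

lemma matrix_inv_cancel:
  fixes A :: "real^'n^'n"
  assumes "invertible A"
  shows "A *v (matrix_inv A *v x) = x" "matrix_inv A *v (A *v x) = x"
  by (simp_all add: matrix_vector_mul_assoc matrix_inv_right matrix_inv_left assms)

lemma matrix_inv_eqI:
  fixes A B :: "real^'n^'n"
  assumes "A ** B = mat 1"
  shows "matrix_inv A = B"
proof -
  have "invertible A"
    using assms matrix_left_right_inverse unfolding invertible_def by blast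
  then have "matrix_inv A = matrix_inv A ** (A ** B)"
    using assms by simp
  also have "\<dots> = B" by (simp add: matrix_mul_assoc matrix_inv_left \<open>invertible A\<close>)
  finally show ?thesis .
qed

lemma matrix_inv_matrix_inv:
  fixes S :: "real^'d^'d"
  assumes "invertible S"
  shows "matrix_inv (matrix_inv S) = S"
  by (rule matrix_inv_eqI) (rule matrix_inv_left[OF assms])

lemma det_matrix_inv:
  fixes S :: "real^'d^'d"
  assumes "invertible S"
  shows "det (matrix_inv S) = 1 / det S"
proof -
  have "det S * det (matrix_inv S) = 1"
    by (metis det_I det_mul matrix_inv_right[OF assms])
  then show ?thesis
    using invertible_det_nz[of S] assms by (simp add: field_simps)
qed

lemma matrix_inv_scaleR_mat_1:
  "c \<noteq> 0 \<Longrightarrow> matrix_inv (c *\<^sub>R mat 1 :: real^'d^'d) = (1/c) *\<^sub>R mat 1"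
  by (rule matrix_inv_eqI)
     (simp add: matrix_eq matrix_vector_mul_assoc[symmetric] scaleR_matrix_vector_assoc[symmetric])

lemma det_scaleR_mat_1: "det (c *\<^sub>R mat 1 :: real^'d^'d) = c ^ CARD('d)"
  by (subst det_diagonal) (auto simp: mat_def)

section \<open>The Gaussian integral\<close>

lemma nn_integral_exp_quadratic:
  fixes a b c :: real
  assumes a: "a > 0"
  shows "(\<integral>\<^sup>+y. ennreal (exp (-(1/2) * (a * y\<^sup>2 + 2 * b * y + c))) \<partial>lborel)
       = ennreal (sqrt (2 * pi / a) * exp (-(1/2) * (c - b\<^sup>2 / a)))"
proof -
  let ?K = "sqrt (2 * pi / a) * exp (-(1/2) * (c - b\<^sup>2 / a))"
  have square: "exp (-(1/2) * (a * y\<^sup>2 + 2 * b * y + c)) = ?K * normal_density (-b/a) (1 / sqrt a) y"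
    for y
  proof -
    have "?K * normal_density (-b/a) (1 / sqrt a) y
        = (sqrt (2 * pi / a) / sqrt (2 * pi * (1/a)))
          * (exp (-(1/2) * (c - b\<^sup>2 / a)) * exp (- ((y - (-b/a))\<^sup>2) / (2 * (1/a))))"
      using a by (simp add: normal_density_def power_divide field_simps)
    also have "sqrt (2 * pi / a) / sqrt (2 * pi * (1/a)) = 1"
      using a by simp
    also have "exp (-(1/2) * (c - b\<^sup>2 / a)) * exp (- ((y - (-b/a))\<^sup>2) / (2 * (1/a)))
       = exp (-(1/2) * (a * y\<^sup>2 + 2 * b * y + c))"
      unfolding exp_add[symmetric] using a by (simp add: field_simps power2_eq_square)
    finally show ?thesis by simp
  qed
  have "(\<integral>\<^sup>+y. ennreal (exp (-(1/2) * (a * y\<^sup>2 + 2 * b * y + c))) \<partial>lborel)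
      = (\<integral>\<^sup>+y. ennreal ?K * ennreal (normal_density (-b/a) (1 / sqrt a) y) \<partial>lborel)"
    unfolding square using a by (intro nn_integral_cong ennreal_mult) auto
  also have "\<dots> = ennreal ?K * (\<integral>\<^sup>+y. ennreal (normal_density (-b/a) (1 / sqrt a) y) \<partial>lborel)"
    by (rule nn_integral_cmult) simp
  also have "(\<integral>\<^sup>+y. ennreal (normal_density (-b/a) (1 / sqrt a) y) \<partial>lborel) = 1"
    using a by (subst nn_integral_eq_integral)
      (auto intro!: integrable_normal_density integral_normal_density)
  finally show ?thesis by simp
qed

lemma matrix_vector_mult_measurable [measurable]:
  fixes A :: "real^'n^'m"
  assumes "f \<in> borel_measurable M"
  shows "(\<lambda>x. A *v f x) \<in> borel_measurable M"
proof -
  have "(\<lambda>v. A *v v) \<in> borel_measurable borel"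
    by (intro borel_measurable_continuous_onI linear_continuous_on)
      (simp add: linear_linear matrix_vector_mul_linear)
  then show ?thesis using assms by measurable
qed

definition basis_comb :: "(real^'d) set \<Rightarrow> (real^'d \<Rightarrow> real) \<Rightarrow> real^'d" where
  "basis_comb I f = (\<Sum>b\<in>I. f b *\<^sub>R b)"

lemma basis_comb_measurable [measurable]:
  "basis_comb I \<in> borel_measurable (PiM I (\<lambda>_. lborel))"
  unfolding basis_comb_def by (rule borel_measurable_sum) measurable

lemma inner_basis_comb_notin:
  assumes "I \<subseteq> Basis" "k \<in> Basis" "k \<notin> I"
  shows "k \<bullet> basis_comb I f = 0"
  using assms unfolding basis_comb_def
  by (auto simp: inner_sum_right inner_Basis intro!: sum.neutral)

lemma basis_comb_insert:
  assumes "finite I" "k \<notin> I"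
  shows "basis_comb (insert k I) (f(k := y)) = y *\<^sub>R k + basis_comb I f"
proof -
  have "(\<Sum>b\<in>I. (f(k := y)) b *\<^sub>R b) = (\<Sum>b\<in>I. f b *\<^sub>R b)"
    using assms by (intro sum.cong) auto
  then show ?thesis unfolding basis_comb_def using assms by simp
qed

lemma det_mat_1_add_rank_one_axis:
  fixes u :: "real^'d"
  shows "det (matrix (\<lambda>x. x + (u \<bullet> x) *\<^sub>R axis k 1)) = 1 + u $ k"
proof -
  define A :: "real^'d^'d" where "A = matrix (\<lambda>x. x + (u \<bullet> x) *\<^sub>R axis k 1)"
  have A: "A = (\<chi> i j. (if i = j then 1 else 0) + (if i = k then u $ j else 0))"
    unfolding A_def by (simp add: matrix_def vec_eq_iff cart_eq_inner_axis[symmetric]) (simp add: axis_def)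
  define x :: "real^'d" where "x = - (\<Sum>j\<in>UNIV-{k}. u $ j *s row j A)"
  have row_A: "row j A = axis j 1" if "j \<noteq> k" for j
    using that by (simp add: A row_def vec_eq_iff axis_def)
  have x_span: "x \<in> vec.span {row j A |j. j \<noteq> k}"
    unfolding x_def by (intro vec.span_neg vec.span_sum vec.span_scale vec.span_base) auto
  have x_nth: "x $ j = (if j = k then 0 else - u $ j)" for j
  proof -
    have "x = - (\<Sum>i\<in>UNIV-{k}. u $ i *s axis i 1)"
      unfolding x_def by (intro arg_cong[where f=uminus] sum.cong) (auto simp: row_A)
    moreover have "(\<Sum>i\<in>UNIV-{k}. u $ i * axis i 1 $ j) = (if j = k then 0 else u $ j)"
      by (cases "j = k") (auto simp: axis_def if_distrib sum.delta cong: if_cong)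
    ultimately show ?thesis by (simp add: sum_component)
  qed
  \<comment> \<open>Subtracting the other rows from row \<open>k\<close> leaves a diagonal matrix.\<close>
  have "det A = det (\<chi> i. if i = k then row k A + x else row i A)"
    by (rule det_row_span[OF x_span, symmetric])
  also have "(\<chi> i. if i = k then row k A + x else row i A)
      = (\<chi> i j. if i = j then (if i = k then 1 + u $ k else 1) else 0)"
    by (auto simp: vec_eq_iff row_def A x_nth axis_def)
  also have "det \<dots> = 1 + u $ k"
    by (subst det_diagonal) (auto simp: prod.If_cases)
  finally show ?thesis unfolding A_def .
qed

text \<open>One step of Gaussian elimination on the quadratic form of \<open>S\<close> in the basis direction \<open>k\<close>:
  \<open>reduced\<close> fixes \<open>k\<close> and agrees on the orthogonal complement of \<open>k\<close> with the Schur complement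
  of the pivot \<open>k \<bullet> (S *v k)\<close>.\<close>

locale axis_elimination =
  fixes S :: "real^'d^'d" and k :: "real^'d"
  assumes symmetric: "transpose S = S"
    and positive: "\<And>x. x \<noteq> 0 \<Longrightarrow> 0 < x \<bullet> (S *v x)"
    and k_Basis: "k \<in> Basis"
begin

definition pivot :: real where
  "pivot = k \<bullet> (S *v k)"

definition elim_vec :: "real^'d" where
  "elim_vec = (1 / sqrt pivot) *\<^sub>R k - (1 / pivot) *\<^sub>R (S *v k)"

definition elim_matrix :: "real^'d^'d" where
  "elim_matrix = matrix (\<lambda>x. x + (elim_vec \<bullet> x) *\<^sub>R k)"

definition reduced :: "real^'d^'d" where
  "reduced = transpose elim_matrix ** S ** elim_matrix"

lemma pivot_pos: "pivot > 0"
  unfolding pivot_def using positive k_Basis nonzero_Basis by blast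

lemma elim_matrix_apply: "elim_matrix *v x = x + (elim_vec \<bullet> x) *\<^sub>R k"
proof -
  have "linear (\<lambda>x. x + (elim_vec \<bullet> x) *\<^sub>R k)"
    by (rule linearI) (auto simp: inner_add_right algebra_simps)
  then show ?thesis unfolding elim_matrix_def by (metis matrix_vector_mul(2))
qed

lemma elim_vec_inner_k: "elim_vec \<bullet> k = 1 / sqrt pivot - 1"
proof -
  have "(S *v k) \<bullet> k = pivot" unfolding pivot_def by (simp add: inner_commute)
  then show ?thesis
    unfolding elim_vec_def using pivot_pos k_Basis by (simp add: inner_diff_left inner_Basis)
qed

lemma transpose_elim_matrix_apply: "transpose elim_matrix *v y = y + (k \<bullet> y) *\<^sub>R elim_vec"
proof -
  have "z \<bullet> (transpose elim_matrix *v y) = z \<bullet> (y + (k \<bullet> y) *\<^sub>R elim_vec)" for z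
    by (simp only: inner_matrix_vector_transpose transpose_transpose)
      (simp add: elim_matrix_apply inner_add_left inner_add_right inner_commute)
  then show ?thesis by (metis vector_eq_ldot)
qed

lemma det_elim_matrix: "det elim_matrix = 1 / sqrt pivot"
proof -
  obtain i where k: "k = axis i 1" using axis_inverse[OF k_Basis] by blast
  have "det elim_matrix = 1 + elim_vec $ i"
    using det_mat_1_add_rank_one_axis[of elim_vec i] by (simp add: elim_matrix_def k[symmetric])
  also have "elim_vec $ i = elim_vec \<bullet> k" by (simp add: k cart_eq_inner_axis)
  finally show ?thesis using elim_vec_inner_k by simp
qed

lemma inner_reduced: "x \<bullet> (reduced *v y) = (elim_matrix *v x) \<bullet> (S *v (elim_matrix *v y))"
proof -
  have "reduced *v y = transpose elim_matrix *v (S *v (elim_matrix *v y))"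
    unfolding reduced_def by (simp only: matrix_vector_mul_assoc matrix_mul_assoc)
  then show ?thesis
    by (simp only: inner_matrix_vector_transpose transpose_transpose)
qed

lemma reduced_symmetric: "transpose reduced = reduced"
  unfolding reduced_def using symmetric by (simp add: matrix_transpose_mul matrix_mul_assoc)

lemma det_eq_pivot_mult_det_reduced: "det S = pivot * det reduced"
  unfolding reduced_def using pivot_pos
  by (simp add: det_mul det_transpose det_elim_matrix power2_eq_square[symmetric])

lemma reduced_positive:
  assumes "x \<noteq> 0"
  shows "0 < x \<bullet> (reduced *v x)"
proof -
  have "elim_matrix *v x \<noteq> 0"
  proof
    assume "elim_matrix *v x = 0"
    then have x: "x = - (elim_vec \<bullet> x) *\<^sub>R k"
      unfolding elim_matrix_apply by (simp add: eq_neg_iff_add_eq_0)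
    then have "elim_vec \<bullet> x = - (elim_vec \<bullet> x) * (elim_vec \<bullet> k)"
      by (metis inner_scaleR_right)
    then have "elim_vec \<bullet> x = 0"
      using elim_vec_inner_k pivot_pos by (simp add: algebra_simps)
    with x assms show False by simp
  qed
  then show ?thesis unfolding inner_reduced by (rule positive)
qed

lemma reduced_apply_k: "reduced *v k = k"
proof -
  have "elim_matrix *v k = (1 / sqrt pivot) *\<^sub>R k"
    using elim_vec_inner_k by (simp add: elim_matrix_apply scaleR_diff_left)
  then have "reduced *v k = (1 / sqrt pivot) *\<^sub>R (transpose elim_matrix *v (S *v k))"
    unfolding reduced_def
    by (simp add: matrix_vector_mul_assoc[symmetric] matrix_mul_assoc matrix_vector_mult_scaleR)
  also have "transpose elim_matrix *v (S *v k) = sqrt pivot *\<^sub>R k"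
    using pivot_pos unfolding transpose_elim_matrix_apply elim_vec_def pivot_def[symmetric]
    by (simp add: algebra_simps real_sqrt_divide) (metis real_div_sqrt less_imp_le)
  finally show ?thesis using pivot_pos by simp
qed

lemma reduced_apply_Basis:
  assumes b: "b \<in> Basis" "b \<noteq> k" and Sb: "S *v b = b"
  shows "reduced *v b = b"
proof -
  have kb: "k \<bullet> b = 0" using b k_Basis by (simp add: inner_Basis)
  have "(S *v k) \<bullet> b = k \<bullet> (S *v b)"
    using symmetric_inner_commute[OF symmetric] by (simp add: inner_commute)
  then have "elim_vec \<bullet> b = 0"
    using kb Sb by (simp add: elim_vec_def inner_diff_left)
  then show ?thesis unfolding reduced_def
    by (simp add: matrix_vector_mul_assoc[symmetric] elim_matrix_apply Sb
        transpose_elim_matrix_apply kb del: transpose_matrix_vector)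
qed

lemma quadratic_form_reduced:
  assumes kw: "k \<bullet> w = 0"
  shows "w \<bullet> (reduced *v w) = w \<bullet> (S *v w) - (k \<bullet> (S *v w))\<^sup>2 / pivot"
proof -
  define \<beta> where "\<beta> = k \<bullet> (S *v w)"
  have "(S *v k) \<bullet> w = \<beta>"
    unfolding \<beta>_def using symmetric_inner_commute[OF symmetric, of w k] by (simp add: inner_commute)
  then have elim_w: "elim_vec \<bullet> w = - (\<beta> / pivot)"
    using kw unfolding elim_vec_def by (simp add: inner_diff_right inner_commute)
  have "w \<bullet> (reduced *v w) = (w + (elim_vec \<bullet> w) *\<^sub>R k) \<bullet> (S *v (w + (elim_vec \<bullet> w) *\<^sub>R k))"
    by (simp add: inner_reduced elim_matrix_apply)
  also have "\<dots> = w \<bullet> (S *v w) + 2 * (elim_vec \<bullet> w) * \<beta> + (elim_vec \<bullet> w)\<^sup>2 * pivot"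
    unfolding quadratic_form_add[OF symmetric] quadratic_form_scaleR
    using symmetric_inner_commute[OF symmetric, of w k]
    by (simp add: matrix_vector_mult_scaleR \<beta>_def pivot_def)
  also have "\<dots> = w \<bullet> (S *v w) - \<beta>\<^sup>2 / pivot"
    unfolding elim_w using pivot_pos by (simp add: field_simps power2_eq_square)
  finally show ?thesis unfolding \<beta>_def .
qed

lemma nn_integral_along_axis:
  assumes kw: "k \<bullet> w = 0"
  shows "(\<integral>\<^sup>+y. ennreal (exp (-(1/2) * ((y *\<^sub>R k + w) \<bullet> (S *v (y *\<^sub>R k + w))))) \<partial>lborel)
       = ennreal (sqrt (2 * pi / pivot)) * ennreal (exp (-(1/2) * (w \<bullet> (reduced *v w))))"
proof -
  have "(y *\<^sub>R k + w) \<bullet> (S *v (y *\<^sub>R k + w))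
      = pivot * y\<^sup>2 + 2 * (k \<bullet> (S *v w)) * y + w \<bullet> (S *v w)" for y
    unfolding quadratic_form_add[OF symmetric] quadratic_form_scaleR pivot_def
    by (simp add: matrix_vector_mult_scaleR algebra_simps)
  then have "(\<integral>\<^sup>+y. ennreal (exp (-(1/2) * ((y *\<^sub>R k + w) \<bullet> (S *v (y *\<^sub>R k + w))))) \<partial>lborel)
      = sqrt (2 * pi / pivot) * exp (-(1/2) * (w \<bullet> (S *v w) - (k \<bullet> (S *v w))\<^sup>2 / pivot))"
    by (simp only: nn_integral_exp_quadratic[OF pivot_pos])
  then show ?thesis
    unfolding quadratic_form_reduced[OF kw] using pivot_pos by (simp add: ennreal_mult)
qed

end

lemma nn_integral_exp_quadratic_form_basis_comb:
  fixes S :: "real^'d^'d"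
  assumes "finite I" "I \<subseteq> Basis" "transpose S = S" "\<And>x. x \<noteq> 0 \<Longrightarrow> 0 < x \<bullet> (S *v x)"
    "\<And>b. b \<in> Basis - I \<Longrightarrow> S *v b = b"
  shows "0 < det S \<and>
    (\<integral>\<^sup>+f. ennreal (exp (-(1/2) * (basis_comb I f \<bullet> (S *v basis_comb I f)))) \<partial>PiM I (\<lambda>_. lborel))
      = ennreal (sqrt ((2 * pi) ^ card I / det S))"
  using assms
proof (induction I arbitrary: S rule: finite_induct)
  case empty
  interpret product_sigma_finite "\<lambda>_::real^'d. lborel :: real measure"
    by (simp add: product_sigma_finite_def sigma_finite_lborel)
  have "(*v) S = id"
    using empty.prems by (intro linear_eq_stdbasis matrix_vector_mul_linear linear_id) auto
  then have "S = mat 1" by (simp add: matrix_eq)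
  then show ?case
    by (simp add: basis_comb_def space_PiM_empty emeasure_PiM_empty)
next
  case (insert k I)
  interpret axis_elimination S k
    using insert.prems by unfold_locales auto
  interpret product_sigma_finite "\<lambda>_::real^'d. lborel :: real measure"
    by (simp add: product_sigma_finite_def sigma_finite_lborel)
  let ?Q = "\<lambda>T v. ennreal (exp (-(1/2) * (v \<bullet> (T *v v))))"
  have reduced_fixes: "reduced *v b = b" if "b \<in> Basis - I" for b
    using that insert.prems(4)
    by (cases "b = k") (auto intro: reduced_apply_Basis simp: reduced_apply_k)
  have IH: "0 < det reduced \<and>
      (\<integral>\<^sup>+f. ?Q reduced (basis_comb I f) \<partial>PiM I (\<lambda>_. lborel)) = sqrt ((2 * pi) ^ card I / det reduced)"
    using insert.prems by (intro insert.IH reduced_symmetric reduced_positive reduced_fixes) auto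
  have "(\<integral>\<^sup>+f. ?Q S (basis_comb (insert k I) f) \<partial>PiM (insert k I) (\<lambda>_. lborel))
      = (\<integral>\<^sup>+f. (\<integral>\<^sup>+y. ?Q S (basis_comb (insert k I) (f(k := y))) \<partial>lborel) \<partial>PiM I (\<lambda>_. lborel))"
    by (rule product_nn_integral_insert[OF insert.hyps]) measurable
  also have "\<dots> = (\<integral>\<^sup>+f. sqrt (2 * pi / pivot) * ?Q reduced (basis_comb I f) \<partial>PiM I (\<lambda>_. lborel))"
  proof (rule nn_integral_cong)
    fix f
    have "k \<bullet> basis_comb I f = 0"
      using insert by (intro inner_basis_comb_notin) auto
    then show "(\<integral>\<^sup>+y. ?Q S (basis_comb (insert k I) (f(k := y))) \<partial>lborel)
        = sqrt (2 * pi / pivot) * ?Q reduced (basis_comb I f)"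
      by (simp only: basis_comb_insert[OF insert.hyps] nn_integral_along_axis)
  qed
  also have "\<dots> = ennreal (sqrt (2 * pi / pivot)) * sqrt ((2 * pi) ^ card I / det reduced)"
    using IH by (subst nn_integral_cmult) auto
  also have "\<dots> = sqrt ((2 * pi) ^ card (insert k I) / det S)"
    using pivot_pos IH insert.hyps
    by (simp add: ennreal_mult[symmetric] real_sqrt_mult[symmetric] det_eq_pivot_mult_det_reduced
        field_simps)
  finally show ?case
    using IH pivot_pos by (simp add: det_eq_pivot_mult_det_reduced)
qed

lemma spd_det_pos: "spd S \<Longrightarrow> 0 < det S"
  using nn_integral_exp_quadratic_form_basis_comb[of Basis S] unfolding spd_def by auto

lemma nn_integral_exp_quadratic_form:
  fixes S :: "real^'d^'d"
  assumes "spd S"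
  shows "(\<integral>\<^sup>+x. ennreal (exp (-(1/2) * ((x - mu) \<bullet> (S *v (x - mu))))) \<partial>lborel)
       = ennreal (sqrt ((2 * pi) ^ CARD('d) / det S))"
proof -
  let ?Q = "\<lambda>v. ennreal (exp (-(1/2) * (v \<bullet> (S *v v))))"
  have "(\<integral>\<^sup>+x. ?Q (x - mu) \<partial>lborel) = (\<integral>\<^sup>+x. ?Q (x - mu) \<partial>distr lborel borel ((+) mu))"
    by (simp add: lborel_distr_plus)
  also have "\<dots> = (\<integral>\<^sup>+x. ?Q x \<partial>lborel)"
    by (subst nn_integral_distr) auto
  also have "\<dots> = (\<integral>\<^sup>+f. ?Q (basis_comb Basis f) \<partial>PiM Basis (\<lambda>_. lborel))"
    by (subst lborel_eq, subst nn_integral_distr) (auto simp: basis_comb_def[symmetric])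
  also have "\<dots> = ennreal (sqrt ((2 * pi) ^ CARD('d) / det S))"
    using nn_integral_exp_quadratic_form_basis_comb[of Basis S] assms unfolding spd_def by auto
  finally show ?thesis .
qed

lemma spd_invertible: "spd S \<Longrightarrow> invertible S"
  using spd_det_pos invertible_det_nz by force

lemma spd_matrix_inv:
  fixes S :: "real^'d^'d"
  assumes "spd S"
  shows "spd (matrix_inv S)"
proof (rule spdI)
  have inv: "invertible S" using spd_invertible[OF assms] .
  have sym: "transpose S = S" using assms unfolding spd_def by auto
  have S_inv: "S *v (matrix_inv S *v x) = x" for x
    by (simp add: matrix_vector_mul_assoc matrix_inv_right[OF inv])
  show "x \<bullet> (matrix_inv S *v y) = y \<bullet> (matrix_inv S *v x)" for x y
    using symmetric_inner_commute[OF sym, of "matrix_inv S *v x" "matrix_inv S *v y"]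
    by (simp add: S_inv inner_commute)
  show "0 < x \<bullet> (matrix_inv S *v x)" if "x \<noteq> 0" for x
  proof -
    have "matrix_inv S *v x \<noteq> 0" using S_inv[of x] that by auto
    then have "0 < (matrix_inv S *v x) \<bullet> (S *v (matrix_inv S *v x))"
      using assms unfolding spd_def by blast
    then show ?thesis by (simp add: S_inv inner_commute)
  qed
qed

lemma gauss_pdf_pos: "spd S \<Longrightarrow> 0 < gauss_pdf mu S x"
  unfolding gauss_pdf_def using spd_det_pos[of S] by simp

lemma gauss_pdf_measurable [measurable]: "gauss_pdf mu S \<in> borel_measurable borel"
  unfolding gauss_pdf_def[abs_def] by measurable

lemma nn_integral_gauss_pdf:
  fixes S :: "real^'d^'d"
  assumes "spd S"
  shows "(\<integral>\<^sup>+x. ennreal (gauss_pdf mu S x) \<partial>lborel) = 1"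
proof -
  have det_pos: "0 < det S" using spd_det_pos[OF assms] .
  define K where "K = sqrt ((2 * pi) ^ CARD('d) * det S)"
  have K_pos: "K > 0" unfolding K_def using det_pos by simp
  have "(\<integral>\<^sup>+x. ennreal (gauss_pdf mu S x) \<partial>lborel)
      = (\<integral>\<^sup>+x. ennreal (1/K) * ennreal (exp (-(1/2) * ((x - mu) \<bullet> (matrix_inv S *v (x - mu))))) \<partial>lborel)"
    unfolding gauss_pdf_def K_def[symmetric]
    using K_pos by (intro nn_integral_cong) (simp add: ennreal_mult[symmetric])
  also have "\<dots> = ennreal (1/K) * sqrt ((2 * pi) ^ CARD('d) / det (matrix_inv S))"
    using nn_integral_exp_quadratic_form[OF spd_matrix_inv[OF assms], of mu]
    by (subst nn_integral_cmult) auto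
  also have "\<dots> = 1"
    unfolding det_matrix_inv[OF spd_invertible[OF assms]] K_def
    using det_pos by (simp add: ennreal_mult[symmetric] real_sqrt_mult)
  finally show ?thesis .
qed

lemma integrable_gauss_pdf: "spd S \<Longrightarrow> integrable lborel (gauss_pdf mu S)"
  by (rule integrableI_nonneg) (auto simp: nn_integral_gauss_pdf less_imp_le[OF gauss_pdf_pos])

lemma integral_gauss_pdf: "spd S \<Longrightarrow> (\<integral>x. gauss_pdf mu S x \<partial>lborel) = 1"
  by (subst integral_eq_nn_integral) (auto simp: nn_integral_gauss_pdf less_imp_le[OF gauss_pdf_pos])

lemma prob_space_normal_measure: "spd S \<Longrightarrow> prob_space (normal_measure mu S)"
  unfolding normal_measure_def
  by (rule prob_spaceI) (simp add: emeasure_density nn_integral_gauss_pdf)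

section \<open>Conjugacy of a Gaussian prior and a linear Gaussian likelihood\<close>

lemmas matrix_vector_mult_distribs =
  matrix_vector_mult_add_rdistrib matrix_vector_mult_diff_rdistrib
  scaleR_matrix_vector_assoc[symmetric] matrix_vector_right_distrib
  matrix_vector_mult_diff_distrib matrix_vector_mult_scaleR matrix_vector_mul_assoc[symmetric]

definition post_prec :: "real^'n^'m \<Rightarrow> real \<Rightarrow> real \<Rightarrow> real^'n^'n" where
  "post_prec A sg t = (1 / t\<^sup>2) *\<^sub>R mat 1 + (1 / sg\<^sup>2) *\<^sub>R (transpose A ** A)"

lemma post_cov_eq_matrix_inv_post_prec: "post_cov A sg t = matrix_inv (post_prec A sg t)"
  unfolding post_cov_def post_prec_def ..

lemma marg_cov_apply: "marg_cov A sg t *v z = sg\<^sup>2 *\<^sub>R z + t\<^sup>2 *\<^sub>R (A *v (transpose A *v z))"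
  unfolding marg_cov_def by (simp add: matrix_vector_mult_distribs)

lemma post_prec_apply:
  "post_prec A sg t *v z = (1 / t\<^sup>2) *\<^sub>R z + (1 / sg\<^sup>2) *\<^sub>R (transpose A *v (A *v z))"
  unfolding post_prec_def by (simp add: matrix_vector_mult_distribs)

lemma inner_marg_cov:
  "x \<bullet> (marg_cov A sg t *v y) = sg\<^sup>2 * (x \<bullet> y) + t\<^sup>2 * ((transpose A *v x) \<bullet> (transpose A *v y))"
  by (simp only: marg_cov_apply inner_add_right inner_scaleR_right inner_matrix_vector_transpose[of x A])

lemma inner_post_prec:
  "x \<bullet> (post_prec A sg t *v y) = (1 / t\<^sup>2) * (x \<bullet> y) + (1 / sg\<^sup>2) * ((A *v x) \<bullet> (A *v y))"
  by (simp only: post_prec_apply inner_add_right inner_scaleR_right inner_matrix_vector_transpose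
      transpose_transpose)

lemma spd_marg_cov:
  assumes "sg > 0"
  shows "spd (marg_cov A sg t)"
proof (rule spdI)
  show "x \<bullet> (marg_cov A sg t *v y) = y \<bullet> (marg_cov A sg t *v x)" for x y
    by (simp add: inner_marg_cov inner_commute)
  show "0 < x \<bullet> (marg_cov A sg t *v x)" if "x \<noteq> 0" for x
    using assms that by (simp add: inner_marg_cov add_pos_nonneg)
qed

lemma spd_post_prec:
  assumes "sg > 0" "t > 0"
  shows "spd (post_prec A sg t)"
proof (rule spdI)
  show "x \<bullet> (post_prec A sg t *v y) = y \<bullet> (post_prec A sg t *v x)" for x y
    by (simp add: inner_post_prec inner_commute)
  show "0 < x \<bullet> (post_prec A sg t *v x)" if "x \<noteq> 0" for x
    using assms that by (simp add: inner_post_prec add_pos_nonneg)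
qed

lemma spd_post_cov: "sg > 0 \<Longrightarrow> t > 0 \<Longrightarrow> spd (post_cov A sg t)"
  unfolding post_cov_eq_matrix_inv_post_prec by (intro spd_matrix_inv spd_post_prec)

lemma post_prec_cancel:
  fixes A :: "real^'n^'m"
  assumes "sg > 0" "t > 0"
  shows "post_prec A sg t *v (post_cov A sg t *v z) = z" "post_cov A sg t *v (post_prec A sg t *v z) = z"
  unfolding post_cov_eq_matrix_inv_post_prec
  using matrix_inv_cancel[OF spd_invertible[OF spd_post_prec[OF assms]]] by auto

lemma woodbury_matrix_inv_marg_cov:
  fixes A :: "real^'n^'m"
  assumes sg: "sg > 0" and t: "t > 0"
  shows "matrix_inv (marg_cov A sg t) *v z
      = (1 / sg\<^sup>2) *\<^sub>R z - (1 / sg^4) *\<^sub>R (A *v (post_cov A sg t *v (transpose A *v z)))"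
proof -
  define W :: "real^'m^'m" where
    "W = (1 / sg\<^sup>2) *\<^sub>R mat 1 - (1 / sg^4) *\<^sub>R (A ** post_cov A sg t ** transpose A)"
  have "marg_cov A sg t *v (W *v z) = z" for z
  proof -
    define p where "p = post_cov A sg t *v (transpose A *v z)"
    have "(1 / t\<^sup>2) *\<^sub>R p + (1 / sg\<^sup>2) *\<^sub>R (transpose A *v (A *v p)) = transpose A *v z"
      using post_prec_cancel(1)[OF sg t] unfolding p_def post_prec_apply .
    then have "(1 / sg\<^sup>2) *\<^sub>R (transpose A *v (A *v p)) = transpose A *v z - (1 / t\<^sup>2) *\<^sub>R p"
      by (metis add_diff_cancel_left')
    then have "sg\<^sup>2 *\<^sub>R ((1 / sg\<^sup>2) *\<^sub>R (transpose A *v (A *v p)))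
        = sg\<^sup>2 *\<^sub>R (transpose A *v z - (1 / t\<^sup>2) *\<^sub>R p)"
      by (rule arg_cong)
    then have ATAp: "transpose A *v (A *v p) = sg\<^sup>2 *\<^sub>R (transpose A *v z) - (sg\<^sup>2 / t\<^sup>2) *\<^sub>R p"
      using sg by (simp add: scaleR_diff_right)
    have Wz: "W *v z = (1 / sg\<^sup>2) *\<^sub>R z - (1 / sg^4) *\<^sub>R (A *v p)"
      unfolding W_def p_def by (simp add: matrix_vector_mult_distribs)
    show ?thesis
      unfolding marg_cov_apply Wz
      by (simp add: matrix_vector_mult_distribs ATAp vec_eq_iff del: transpose_matrix_vector)
        (use sg t in \<open>simp add: field_simps\<close>)
  qed
  then have "matrix_inv (marg_cov A sg t) = W"
    by (intro matrix_inv_eqI) (simp add: matrix_eq matrix_vector_mul_assoc[symmetric])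
  then show ?thesis unfolding W_def by (simp add: matrix_vector_mult_distribs)
qed

lemma post_mean_eq:
  fixes A :: "real^'n^'m"
  assumes sg: "sg > 0" and t: "t > 0"
  shows "post_mean A sg mu t y
    = mu + (1 / sg\<^sup>2) *\<^sub>R (post_cov A sg t *v (transpose A *v (y - A *v mu)))"
proof -
  have "(1 / t\<^sup>2) *\<^sub>R mu + (1 / sg\<^sup>2) *\<^sub>R (transpose A *v y)
      = post_prec A sg t *v mu + (1 / sg\<^sup>2) *\<^sub>R (transpose A *v (y - A *v mu))"
    by (simp add: post_prec_apply matrix_vector_mult_distribs algebra_simps)
  then show ?thesis
    unfolding post_mean_def using post_prec_cancel(2)[OF sg t]
    by (simp add: matrix_vector_mult_distribs)
qed

lemma prior_likelihood_exponent_complete_square: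
  fixes A :: "real^'n^'m" and mu x :: "real^'n" and y :: "real^'m"
  assumes sg: "sg > 0" and t: "t > 0"
  shows "(1 / t\<^sup>2) * ((x - mu) \<bullet> (x - mu)) + (1 / sg\<^sup>2) * ((y - A *v x) \<bullet> (y - A *v x))
       = (y - A *v mu) \<bullet> (matrix_inv (marg_cov A sg t) *v (y - A *v mu))
         + (x - post_mean A sg mu t y) \<bullet> (post_prec A sg t *v (x - post_mean A sg mu t y))"
proof -
  define P where "P = post_prec A sg t"
  define r where "r = y - A *v mu"
  define d where "d = x - mu"
  define g where "g = transpose A *v r"
  define h where "h = post_cov A sg t *v g"
  define v where "v = (1 / sg\<^sup>2) *\<^sub>R h"
  have sym_P: "transpose P = P"
    using spd_post_prec[OF sg t] unfolding P_def spd_def by auto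
  have x_centered: "x - post_mean A sg mu t y = d - v"
    unfolding post_mean_eq[OF sg t] d_def v_def h_def g_def r_def by simp
  have residual: "y - A *v x = r - A *v d"
    unfolding r_def d_def by (simp add: matrix_vector_mult_distribs)
  have P_v: "P *v v = (1 / sg\<^sup>2) *\<^sub>R g"
    unfolding v_def h_def P_def by (simp only: matrix_vector_mult_scaleR post_prec_cancel(1)[OF sg t])
  have "(r - A *v d) \<bullet> (r - A *v d) = r \<bullet> r - 2 * ((A *v d) \<bullet> r) + (A *v d) \<bullet> (A *v d)"
    by (simp add: inner_diff_left inner_diff_right inner_commute)
  moreover have "(d - v) \<bullet> (P *v (d - v)) = d \<bullet> (P *v d) - 2 * (d \<bullet> (P *v v)) + v \<bullet> (P *v v)"
    using symmetric_inner_commute[OF sym_P, of d v]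
    by (simp add: matrix_vector_mult_distribs inner_diff_left inner_diff_right)
  moreover have "d \<bullet> (P *v d) = (1 / t\<^sup>2) * (d \<bullet> d) + (1 / sg\<^sup>2) * ((A *v d) \<bullet> (A *v d))"
    unfolding P_def by (rule inner_post_prec)
  moreover have "d \<bullet> (P *v v) = (1 / sg\<^sup>2) * ((A *v d) \<bullet> r)"
    unfolding P_v g_def by (simp only: inner_scaleR_right inner_matrix_vector_transpose transpose_transpose)
  moreover have "v \<bullet> (P *v v) = (1 / sg^4) * (h \<bullet> g)"
    unfolding P_v by (simp add: v_def power4_eq_xxxx power2_eq_square)
  moreover have "r \<bullet> (matrix_inv (marg_cov A sg t) *v r) = (1 / sg\<^sup>2) * (r \<bullet> r) - (1 / sg^4) * (g \<bullet> h)"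
    unfolding woodbury_matrix_inv_marg_cov[OF sg t] g_def[symmetric] h_def[symmetric]
    by (simp add: inner_diff_right inner_matrix_vector_transpose[of r A] g_def)
  ultimately show ?thesis
    unfolding x_centered residual P_def[symmetric] r_def[symmetric] d_def[symmetric]
    by (simp add: inner_commute[of h g] algebra_simps)
qed

lemma gauss_pdf_scaleR_mat_1:
  fixes mu x :: "real^'d"
  assumes "c \<noteq> 0"
  shows "gauss_pdf mu (c *\<^sub>R mat 1) x
    = exp (-(1/2) * ((1 / c) * ((x - mu) \<bullet> (x - mu)))) / sqrt ((2 * pi) ^ CARD('d) * c ^ CARD('d))"
  unfolding gauss_pdf_def det_scaleR_mat_1 matrix_inv_scaleR_mat_1[OF assms]
  by (simp add: scaleR_matrix_vector_assoc[symmetric])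

lemma (in pair_sigma_finite) two_factorizations_constant_eq_1:
  fixes f :: "'a \<Rightarrow> ennreal" and g :: "'a \<Rightarrow> 'b \<Rightarrow> ennreal"
    and f' :: "'b \<Rightarrow> ennreal" and g' :: "'b \<Rightarrow> 'a \<Rightarrow> ennreal"
  assumes joint: "(\<lambda>(x, y). f x * g x y) \<in> borel_measurable (M1 \<Otimes>\<^sub>M M2)"
    and [measurable]: "f' \<in> borel_measurable M2"
      "\<And>x. g x \<in> borel_measurable M2" "\<And>y. g' y \<in> borel_measurable M1"
    and f: "(\<integral>\<^sup>+x. f x \<partial>M1) = 1" and g: "\<And>x. (\<integral>\<^sup>+y. g x y \<partial>M2) = 1"
    and f': "(\<integral>\<^sup>+y. f' y \<partial>M2) = 1" and g': "\<And>y. (\<integral>\<^sup>+x. g' y x \<partial>M1) = 1"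
    and eq: "\<And>x y. f x * g x y = c * (f' y * g' y x)"
  shows "c = 1"
proof -
  have "(\<integral>\<^sup>+x. (\<integral>\<^sup>+y. f x * g x y \<partial>M2) \<partial>M1) = 1"
    by (simp add: nn_integral_cmult g f)
  moreover have "(\<integral>\<^sup>+y. (\<integral>\<^sup>+x. f x * g x y \<partial>M1) \<partial>M2) = c"
    by (simp add: eq mult.assoc[symmetric] nn_integral_cmult g' f')
  ultimately show ?thesis using Fubini'[OF joint] by simp
qed

lemma gauss_prior_mult_likelihood:
  fixes A :: "real^'n^'m" and mu x :: "real^'n" and y :: "real^'m"
  assumes sg: "sg > 0" and t: "t > 0"
  shows "gauss_pdf mu (t\<^sup>2 *\<^sub>R mat 1) x * gauss_pdf (A *v x) (sg\<^sup>2 *\<^sub>R mat 1) y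
       = gauss_pdf (A *v mu) (marg_cov A sg t) y * gauss_pdf (post_mean A sg mu t y) (post_cov A sg t) x"
proof -
  let ?prior = "\<lambda>x. gauss_pdf mu (t\<^sup>2 *\<^sub>R mat 1) x"
  let ?lik = "\<lambda>x y. gauss_pdf (A *v x) (sg\<^sup>2 *\<^sub>R mat 1) y"
  let ?marg = "\<lambda>y. gauss_pdf (A *v mu) (marg_cov A sg t) y"
  let ?post = "\<lambda>y x. gauss_pdf (post_mean A sg mu t y) (post_cov A sg t) x"
  have spd: "spd (t\<^sup>2 *\<^sub>R mat 1 :: real^'n^'n)" "spd (sg\<^sup>2 *\<^sub>R mat 1 :: real^'m^'m)"
    "spd (marg_cov A sg t)" "spd (post_cov A sg t)"
    using sg t by (simp_all add: spd_scaleR_mat_1 spd_marg_cov spd_post_cov)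
  have post_prec: "matrix_inv (post_cov A sg t) = post_prec A sg t"
    unfolding post_cov_eq_matrix_inv_post_prec
    using matrix_inv_matrix_inv spd_invertible spd_post_prec sg t by blast
  define E where "E x y = exp (-(1/2) *
    ((y - A *v mu) \<bullet> (matrix_inv (marg_cov A sg t) *v (y - A *v mu))
     + (x - post_mean A sg mu t y) \<bullet> (post_prec A sg t *v (x - post_mean A sg mu t y))))" for x y
  define K1 where "K1 = 1 / (sqrt ((2 * pi) ^ CARD('n) * (t\<^sup>2) ^ CARD('n))
                         * sqrt ((2 * pi) ^ CARD('m) * (sg\<^sup>2) ^ CARD('m)))"
  define K2 where "K2 = 1 / (sqrt ((2 * pi) ^ CARD('m) * det (marg_cov A sg t))
                         * sqrt ((2 * pi) ^ CARD('n) * det (post_cov A sg t)))"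
  have K1_pos: "K1 > 0" and E_pos: "E x y > 0" for x y
    unfolding K1_def E_def using sg t by simp_all
  have K2_pos: "K2 > 0"
    unfolding K2_def using spd_det_pos[OF spd(3)] spd_det_pos[OF spd(4)] by simp
  have prior_lik: "?prior x * ?lik x y = K1 * E x y" for x y
  proof -
    have "?prior x * ?lik x y = K1 * (exp (-(1/2) * ((1 / t\<^sup>2) * ((x - mu) \<bullet> (x - mu))))
        * exp (-(1/2) * ((1 / sg\<^sup>2) * ((y - A *v x) \<bullet> (y - A *v x)))))"
      using sg t by (simp add: gauss_pdf_scaleR_mat_1 K1_def)
    also have "\<dots> = K1 * E x y"
      unfolding E_def
      by (simp only: exp_add[symmetric] prior_likelihood_exponent_complete_square[OF sg t, symmetric])
        (simp add: algebra_simps)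
    finally show ?thesis .
  qed
  have marg_post: "?marg y * ?post y x = K2 * E x y" for x y
    unfolding gauss_pdf_def K2_def E_def post_prec
    by (simp add: exp_add[symmetric] algebra_simps)
  have "ennreal (K1 / K2) = 1"
  proof (rule pair_sigma_finite.two_factorizations_constant_eq_1)
    show "pair_sigma_finite (lborel :: (real^'n) measure) (lborel :: (real^'m) measure)"
      by (simp add: pair_sigma_finite_def sigma_finite_lborel)
    show "(\<lambda>(x, y). ennreal (?prior x) * ennreal (?lik x y)) \<in> borel_measurable (lborel \<Otimes>\<^sub>M lborel)"
      unfolding gauss_pdf_def by measurable
    show "ennreal (?prior x) * ennreal (?lik x y) = ennreal (K1 / K2) * (ennreal (?marg y) * ennreal (?post y x))"
      for x y
      using K1_pos K2_pos E_pos[of x y] spd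
      by (simp add: prior_lik marg_post ennreal_mult[symmetric] less_imp_le[OF gauss_pdf_pos])
  qed (use spd in \<open>simp_all add: nn_integral_gauss_pdf\<close>)
  then have "K1 = K2"
    using K2_pos by (metis divide_eq_1_iff ennreal_eq_1)
  then show ?thesis
    using prior_lik marg_post by simp
qed

section \<open>Mixtures and total variation\<close>

lemma measure_density_sum:
  fixes f :: "'j \<Rightarrow> 'a \<Rightarrow> real"
  assumes J: "finite J" and B: "B \<in> sets M"
    and f_meas: "\<And>j. j \<in> J \<Longrightarrow> f j \<in> borel_measurable M"
    and f_nonneg: "\<And>j x. j \<in> J \<Longrightarrow> 0 \<le> f j x" and c_nonneg: "\<And>j. j \<in> J \<Longrightarrow> 0 \<le> c j"
    and finite: "\<And>j. j \<in> J \<Longrightarrow> finite_measure (density M (f j))"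
  shows "measure (density M (\<lambda>x. \<Sum>j\<in>J. c j * f j x)) B
       = (\<Sum>j\<in>J. c j * measure (density M (f j)) B)"
proof -
  have "emeasure (density M (\<lambda>x. \<Sum>j\<in>J. c j * f j x)) B
      = (\<integral>\<^sup>+x. (\<Sum>j\<in>J. ennreal (c j) * (ennreal (f j x) * indicator B x)) \<partial>M)"
    using f_meas B c_nonneg f_nonneg
    by (simp add: emeasure_density sum_distrib_right mult.assoc ennreal_mult
        sum_ennreal[symmetric] cong: nn_integral_cong)
  also have "\<dots> = (\<Sum>j\<in>J. ennreal (c j) * emeasure (density M (f j)) B)"
    using f_meas B by (simp add: nn_integral_sum nn_integral_cmult emeasure_density)
  also have "\<dots> = (\<Sum>j\<in>J. ennreal (c j * measure (density M (f j)) B))"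
    using c_nonneg finite
    by (intro sum.cong) (simp_all add: finite_measure.emeasure_eq_measure ennreal_mult)
  also have "\<dots> = ennreal (\<Sum>j\<in>J. c j * measure (density M (f j)) B)"
    using c_nonneg by (intro sum_ennreal) simp
  finally show ?thesis
    unfolding measure_def using c_nonneg by (simp add: sum_nonneg measure_nonneg)
qed

lemma abs_convex_comb_diff_le:
  fixes p a :: "'j \<Rightarrow> real"
  assumes J: "finite J" "js \<in> J"
    and p: "\<And>j. j \<in> J \<Longrightarrow> 0 \<le> p j" "(\<Sum>j\<in>J. p j) = 1"
    and a: "\<And>j. j \<in> J \<Longrightarrow> 0 \<le> a j \<and> a j \<le> 1"
  shows "\<bar>(\<Sum>j\<in>J. p j * a j) - a js\<bar> \<le> (\<Sum>j\<in>J - {js}. p j)"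
proof -
  have "(\<Sum>j\<in>J. p j * a j) - a js = (\<Sum>j\<in>J. p j * (a j - a js))"
    using p(2) by (simp add: right_diff_distrib sum_subtractf sum_distrib_right[symmetric])
  also have "\<dots> = (\<Sum>j\<in>J - {js}. p j * (a j - a js))"
    using J by (simp add: sum.remove)
  finally have "\<bar>(\<Sum>j\<in>J. p j * a j) - a js\<bar> \<le> (\<Sum>j\<in>J - {js}. \<bar>p j * (a j - a js)\<bar>)"
    by (simp add: sum_abs)
  also have "\<dots> \<le> (\<Sum>j\<in>J - {js}. p j)"
  proof (rule sum_mono)
    fix j assume j: "j \<in> J - {js}"
    have "\<bar>a j - a js\<bar> \<le> 1" using a[of j] a[OF J(2)] j by auto
    then show "\<bar>p j * (a j - a js)\<bar> \<le> p j"
      using p(1)[of j] j by (simp add: abs_mult mult_left_le)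
  qed
  finally show ?thesis .
qed

lemma tv_dist_density_mixture_le:
  fixes f :: "'j \<Rightarrow> 'a \<Rightarrow> real"
  assumes J: "finite J" "js \<in> J"
    and f_meas: "\<And>j. j \<in> J \<Longrightarrow> f j \<in> borel_measurable M"
    and f_nonneg: "\<And>j x. j \<in> J \<Longrightarrow> 0 \<le> f j x"
    and prob: "\<And>j. j \<in> J \<Longrightarrow> prob_space (density M (f j))"
    and p: "\<And>j. j \<in> J \<Longrightarrow> 0 \<le> p j" "(\<Sum>j\<in>J. p j) = 1"
  shows "tv_dist (density M (\<lambda>x. \<Sum>j\<in>J. p j * f j x)) (density M (f js)) \<le> (\<Sum>j\<in>J - {js}. p j)"
  unfolding tv_dist_def
proof (rule cSUP_least)
  show "sets (density M (\<lambda>x. \<Sum>j\<in>J. p j * f j x)) \<noteq> {}"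
    using sets.empty_sets by blast
next
  fix B assume "B \<in> sets (density M (\<lambda>x. \<Sum>j\<in>J. p j * f j x))"
  then have B: "B \<in> sets M" by simp
  have mixture: "measure (density M (\<lambda>x. \<Sum>j\<in>J. p j * f j x)) B
      = (\<Sum>j\<in>J. p j * measure (density M (f j)) B)"
    using assms B by (intro measure_density_sum) (auto simp: prob_space_def)
  have bounds: "0 \<le> measure (density M (f j)) B \<and> measure (density M (f j)) B \<le> 1"
    if "j \<in> J" for j
    using prob[OF that] by (simp add: prob_space.prob_le_1 measure_nonneg)
  have "\<bar>(\<Sum>j\<in>J. p j * measure (density M (f j)) B) - measure (density M (f js)) B\<bar>
      \<le> (\<Sum>j\<in>J - {js}. p j)"
    by (intro abs_convex_comb_diff_le[OF J p] bounds)
  then show "\<bar>measure (density M (\<lambda>x. \<Sum>j\<in>J. p j * f j x)) B - measure (density M (f js)) B\<bar>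
      \<le> (\<Sum>j\<in>J - {js}. p j)"
    unfolding mixture .
qed

section \<open>The posterior of the Gaussian mixture\<close>

lemma bayes_posterior_eq_mixture:
  fixes A :: "real^'n^'m"
  assumes sg: "sg > 0" and tau: "\<forall>j<M. tau j > 0"
  shows "bayes_posterior M w mu tau A sg y
    = density lborel (\<lambda>x. \<Sum>j<M. post_weight M w mu tau A sg y j
        * gauss_pdf (post_mean A sg (mu j) (tau j) y) (post_cov A sg (tau j)) x)"
proof -
  define phi where "phi j = gauss_pdf (A *v mu j) (marg_cov A sg (tau j)) y" for j
  define q where "q j = gauss_pdf (post_mean A sg (mu j) (tau j) y) (post_cov A sg (tau j))" for j
  have joint: "mix_prior M w mu tau x * lin_gauss_lik A sg y x = (\<Sum>j<M. w j * phi j * q j x)" for x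
    unfolding mix_prior_def lin_gauss_lik_def sum_distrib_right phi_def q_def
    using sg tau by (intro sum.cong) (simp_all add: mult.assoc gauss_prior_mult_likelihood)
  have evidence: "(\<integral>x. mix_prior M w mu tau x * lin_gauss_lik A sg y x \<partial>lborel) = (\<Sum>j<M. w j * phi j)"
    unfolding joint using sg tau
    by (simp add: integral_sum integrable_gauss_pdf integral_gauss_pdf spd_post_cov q_def)
  show ?thesis
    unfolding bayes_posterior_def evidence unfolding joint
    by (simp add: post_weight_def phi_def q_def sum_divide_distrib)
qed

lemma gauss_pdf_marg_cov_eq_exp_sel_score:
  fixes A :: "real^'n^'m"
  assumes "sg > 0"
  shows "gauss_pdf (A *v mu) (marg_cov A sg t) y
    = exp (- sel_score A sg mu t y) / sqrt ((2 * pi) ^ CARD('m))"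
proof -
  have "0 < det (marg_cov A sg t)"
    using spd_det_pos spd_marg_cov assms by blast
  then have "sqrt (det (marg_cov A sg t)) = exp ((1/2) * ln (det (marg_cov A sg t)))"
    by (simp add: powr_half_sqrt[symmetric] powr_def)
  then show ?thesis
    unfolding gauss_pdf_def sel_score_def sel_s_def
    by (simp add: real_sqrt_mult exp_add exp_diff exp_minus field_simps)
      (simp add: exp_add[symmetric] add_divide_distrib)
qed

lemma post_weight_le_exp_score_gap:
  fixes A :: "real^'n^'m"
  assumes sg: "sg > 0" and w: "\<forall>i<M. w i \<ge> 0" and j: "j < M" and js: "js < M" "w js > 0"
  shows "post_weight M w mu tau A sg y j
    \<le> w j / w js * exp (sel_score A sg (mu js) (tau js) y - sel_score A sg (mu j) (tau j) y)"
proof -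
  define phi where "phi i = gauss_pdf (A *v mu i) (marg_cov A sg (tau i)) y" for i
  have phi_pos: "phi i > 0" for i
    unfolding phi_def using sg by (intro gauss_pdf_pos spd_marg_cov)
  have js_pos: "0 < w js * phi js" "0 < w js" "0 < phi js"
    using js phi_pos by simp_all
  have js_le: "w js * phi js \<le> (\<Sum>i<M. w i * phi i)"
    using js w by (intro member_le_sum) (auto intro!: mult_nonneg_nonneg less_imp_le[OF phi_pos])
  have "post_weight M w mu tau A sg y j \<le> w j * phi j / (w js * phi js)"
    unfolding post_weight_def phi_def[symmetric]
    using w j js_pos js_le order.strict_trans2[OF js_pos(1) js_le]
    by (intro divide_left_mono mult_nonneg_nonneg mult_pos_pos less_imp_le[OF phi_pos]) auto
  also have "\<dots> = w j / w js * exp (sel_score A sg (mu js) (tau js) y - sel_score A sg (mu j) (tau j) y)"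
    unfolding phi_def gauss_pdf_marg_cov_eq_exp_sel_score[OF sg]
    by (simp add: exp_diff exp_minus field_simps)
  finally show ?thesis .
qed

lemma post_weight_nonneg:
  fixes A :: "real^'n^'m"
  assumes "sg > 0" "\<forall>i<M. w i \<ge> 0" "j < M"
  shows "0 \<le> post_weight M w mu tau A sg y j"
  unfolding post_weight_def using assms
  by (auto intro!: divide_nonneg_nonneg sum_nonneg mult_nonneg_nonneg less_imp_le[OF gauss_pdf_pos]
      spd_marg_cov)

lemma sum_post_weight:
  fixes A :: "real^'n^'m"
  assumes sg: "sg > 0" and w: "\<forall>i<M. w i \<ge> 0" and js: "js < M" "w js > 0"
  shows "(\<Sum>j<M. post_weight M w mu tau A sg y j) = 1"
proof -
  let ?phi = "\<lambda>i. gauss_pdf (A *v mu i) (marg_cov A sg (tau i)) y"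
  have "w js * ?phi js \<le> (\<Sum>i<M. w i * ?phi i)"
    using js w sg by (intro member_le_sum) (auto intro!: mult_nonneg_nonneg less_imp_le[OF gauss_pdf_pos]
        spd_marg_cov)
  moreover have "0 < w js * ?phi js"
    using js sg by (simp add: gauss_pdf_pos spd_marg_cov)
  ultimately show ?thesis
    unfolding post_weight_def by (simp add: sum_divide_distrib[symmetric])
qed

lemma sum_post_weight_off_le:
  fixes A :: "real^'n^'m" and sg :: real and mu :: "nat \<Rightarrow> real^'n" and tau :: "nat \<Rightarrow> real"
    and y :: "real^'m"
  defines "ell \<equiv> \<lambda>j. sel_score A sg (mu j) (tau j) y"
  assumes sg: "sg > 0" and w_pos: "\<forall>i<M. w i > 0" and js: "js < M"
    and w_ratio: "\<forall>j<M. w j / w js \<le> C"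
    and gap: "\<forall>j<M. j \<noteq> js \<longrightarrow> ell js + g \<le> ell j"
  shows "(\<Sum>j\<in>{..<M} - {js}. post_weight M w mu tau A sg y j) \<le> C * real M * exp (- g)"
proof -
  have "C \<ge> 0"
    using w_ratio w_pos js by (metis less_le_not_le order.trans divide_pos_pos)
  have "post_weight M w mu tau A sg y j \<le> C * exp (- g)" if "j < M" "j \<noteq> js" for j
  proof -
    have "post_weight M w mu tau A sg y j \<le> w j / w js * exp (ell js - ell j)"
      unfolding ell_def using sg w_pos that js by (intro post_weight_le_exp_score_gap) auto
    also have "\<dots> \<le> C * exp (- g)"
      using w_ratio gap that \<open>C \<ge> 0\<close> by (intro mult_mono) auto
    finally show ?thesis .
  qed
  then have "(\<Sum>j\<in>{..<M} - {js}. post_weight M w mu tau A sg y j) \<le> real (M - 1) * (C * exp (- g))"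
    using sum_mono[of "{..<M} - {js}" _ "\<lambda>_. C * exp (- g)"] js by simp
  also have "\<dots> \<le> real M * (C * exp (- g))"
    using \<open>C \<ge> 0\<close> by (intro mult_right_mono) auto
  finally show ?thesis by (simp add: mult_ac)
qed

theorem theorem4:
  fixes A :: "real^'n^'m" and sg :: real and M :: nat
    and w :: "nat \<Rightarrow> real" and mu :: "nat \<Rightarrow> real^'n" and tau :: "nat \<Rightarrow> real"
    and ystar :: "real^'m" and C delta0 :: real and jstar :: nat
  defines "ell \<equiv> (\<lambda>j. sel_score A sg (mu j) (tau j) ystar)"
  assumes sigma_pos: "sg > 0"
    and M2: "2 \<le> M"
    and tau_pos: "\<forall>j<M. tau j > 0"
    and w_nonneg: "\<forall>j<M. w j \<ge> 0"
    and w_sum: "(\<Sum>j<M. w j) = 1"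
    and C_gt: "C > 1"
    and w_ratio: "\<forall>i<M. \<forall>j<M. 1 / C \<le> w i / w j \<and> w i / w j \<le> C"
    and jstar_lt: "jstar < M"
    and jstar_unique: "\<forall>j<M. j \<noteq> jstar \<longrightarrow> ell jstar < ell j"
    and delta0_pos: "delta0 > 0"
    and gap: "(1 / real CARD('m)) * (Min (ell ` ({..<M} - {jstar})) - ell jstar) \<ge> delta0"
  shows "(\<Sum>j\<in>{..<M} - {jstar}. post_weight M w mu tau A sg ystar j)
           \<le> C * real M * exp (- real CARD('m) * delta0)
         \<and> tv_dist (bayes_posterior M w mu tau A sg ystar)
           (normal_measure (post_mean A sg (mu jstar) (tau jstar) ystar)
                           (post_cov A sg (tau jstar)))
           \<le> C * real M * exp (- real CARD('m) * delta0)"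
proof -
  have w_pos: "\<forall>j<M. w j > 0"
  proof (intro allI impI)
    fix j assume "j < M"
    then have "1 / C \<le> w j / w j" using w_ratio by blast
    then show "w j > 0" using C_gt w_nonneg \<open>j < M\<close> by (cases "w j = 0") auto
  qed
  have score_gap: "\<forall>j<M. j \<noteq> jstar \<longrightarrow> ell jstar + real CARD('m) * delta0 \<le> ell j"
  proof (intro allI impI)
    fix j assume "j < M" "j \<noteq> jstar"
    then have "Min (ell ` ({..<M} - {jstar})) \<le> ell j" by (intro Min_le) auto
    with gap show "ell jstar + real CARD('m) * delta0 \<le> ell j" by (simp add: field_simps)
  qed
  have weights: "(\<Sum>j\<in>{..<M} - {jstar}. post_weight M w mu tau A sg ystar j)
      \<le> C * real M * exp (- real CARD('m) * delta0)"
    using sum_post_weight_off_le[OF sigma_pos w_pos jstar_lt _ score_gap[unfolded ell_def]]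
      w_ratio jstar_lt by simp
  have "tv_dist (bayes_posterior M w mu tau A sg ystar)
      (normal_measure (post_mean A sg (mu jstar) (tau jstar) ystar) (post_cov A sg (tau jstar)))
    \<le> (\<Sum>j\<in>{..<M} - {jstar}. post_weight M w mu tau A sg ystar j)"
    unfolding bayes_posterior_eq_mixture[OF sigma_pos tau_pos] normal_measure_def
    using jstar_lt sigma_pos tau_pos w_nonneg w_pos
    by (intro tv_dist_density_mixture_le sum_post_weight post_weight_nonneg
        prob_space_normal_measure[unfolded normal_measure_def] spd_post_cov
        less_imp_le[OF gauss_pdf_pos]) auto
  with weights show ?thesis by linarith
qed

end
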